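(* Let $\delta:\,]0,+\infty[\to\mathbb R$ be nonnegative, bounded and continuously differentiable, and let $r:\,]\alpha,\omega[\to\,]0,+\infty[$ be a solution of $\ddot r+\delta(r)\dot r=-1/r^2$ which is maximal both to the left and to the right, with energy $h(t)=\frac12\dot r(t)^2-\frac1{r(t)}$. If $\omega<+\infty$ and $h(\omega):=\lim_{t\uparrow\omega}h(t)>-\infty$, then $\lim_{t\uparrow\omega}\dfrac{r(t)}{(\omega-t)^{2/3}}=\sqrt[3]{9/2}$.
   Context: The energy $h$ is nonincreasing along solutions, so the limit $h(\omega)$ exists in $[-\infty,+\infty[$. *)

theory Defs
  imports "HOL-Analysis.Analysis"
begin

definition eint :: "ereal \<Rightarrow> ereal \<Rightarrow> real set" where
  "eint a b = {t. a < ereal t \<and> ereal t < b}"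

definition is_solution :: "(real \<Rightarrow> real) \<Rightarrow> ereal \<Rightarrow> ereal \<Rightarrow> (real \<Rightarrow> real) \<Rightarrow> bool" where
  "is_solution \<delta> a b r \<longleftrightarrow> a < b \<and>
     (\<forall>t\<in>eint a b. r t > 0) \<and>
     (\<exists>v. \<forall>t\<in>eint a b. (r has_real_derivative v t) (at t) \<and>
            (v has_real_derivative (- \<delta> (r t) * v t - 1 / (r t)^2)) (at t))"

definition maximal_solution :: "(real \<Rightarrow> real) \<Rightarrow> ereal \<Rightarrow> ereal \<Rightarrow> (real \<Rightarrow> real) \<Rightarrow> bool" where
  "maximal_solution \<delta> a b r \<longleftrightarrow> is_solution \<delta> a b r \<and>
     (\<forall>a' b' s. a' \<le> a \<and> b \<le> b' \<and> is_solution \<delta> a' b' s \<and>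
        (\<forall>t\<in>eint a b. s t = r t) \<longrightarrow> a' = a \<and> b' = b)"

definition energy :: "(real \<Rightarrow> real) \<Rightarrow> real \<Rightarrow> real" where
  "energy r t = (1/2) * (deriv r t)^2 - 1 / r t"

end

(*
  Along a solution the energy h = r'^2/2 - 1/r satisfies h' = -delta(r) r'^2 <= 0, so a finite
  limit h(omega) bounds h from both sides on a final interval [a, omega). At a turning point
  (r' = 0) we have h = -1/r, so turning points stay above the radius 1/(|H| + 1). If r did not
  tend to 0, it would therefore stay bounded away from 0 near omega (a dip would create a
  turning point), the energy bound would make r' and r'' bounded, r and r' would converge, and
  the Picard-Lindeloef theorem would continue the solution beyond omega, contradicting
  maximality. Hence r -> 0. Then r h -> 0, i.e. r r'^2 -> 2; r' is eventually negative, so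
  sqrt r r' -> -sqrt 2, and L'Hopital's rule applied to r^(3/2) / (omega - t) gives the limit
  (3/2) sqrt 2, whose 2/3-th power is the cube root of 9/2.
*)
theory Submission
  imports Defs
begin

lemma lipschitz_on_fst: "1-lipschitz_on U fst"
  by (rule lipschitz_onI) (auto simp: dist_fst_le)

lemma lipschitz_on_snd: "1-lipschitz_on U snd"
  by (rule lipschitz_onI) (auto simp: dist_snd_le)

lemma lipschitz_on_mult:
  fixes f g :: "'a::metric_space \<Rightarrow> real"
  assumes f: "A-lipschitz_on U f" and g: "B-lipschitz_on U g"
    and f_bound: "\<And>x. x \<in> U \<Longrightarrow> \<bar>f x\<bar> \<le> F" and g_bound: "\<And>x. x \<in> U \<Longrightarrow> \<bar>g x\<bar> \<le> G"
    and "0 \<le> F" "0 \<le> G"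
  shows "(F * B + G * A)-lipschitz_on U (\<lambda>x. f x * g x)"
proof (rule lipschitz_onI)
  show "0 \<le> F * B + G * A"
    using lipschitz_on_nonneg[OF f] lipschitz_on_nonneg[OF g] \<open>0 \<le> F\<close> \<open>0 \<le> G\<close> by simp
  fix x y assume x: "x \<in> U" and y: "y \<in> U"
  have "dist (f x * g x) (f y * g y) = \<bar>f x * (g x - g y) + g y * (f x - f y)\<bar>"
    by (simp add: dist_real_def algebra_simps)
  also have "\<dots> \<le> \<bar>f x\<bar> * \<bar>g x - g y\<bar> + \<bar>g y\<bar> * \<bar>f x - f y\<bar>"
    by (metis abs_mult abs_triangle_ineq)
  also have "\<dots> \<le> F * (B * dist x y) + G * (A * dist x y)"
    using lipschitz_onD[OF f x y] lipschitz_onD[OF g x y] f_bound[OF x] g_bound[OF y]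
    by (intro add_mono mult_mono) (auto simp: dist_real_def)
  finally show "dist (f x * g x) (f y * g y) \<le> (F * B + G * A) * dist x y"
    by (simp add: algebra_simps)
qed

lemma lipschitz_on_of_bounded_deriv:
  fixes f f' :: "real \<Rightarrow> real"
  assumes "convex S" and f': "\<And>x. x \<in> S \<Longrightarrow> (f has_real_derivative f' x) (at x)"
    and bound: "\<And>x. x \<in> S \<Longrightarrow> \<bar>f' x\<bar> \<le> K" and "0 \<le> K"
  shows "K-lipschitz_on S f"
proof (rule bounded_derivative_imp_lipschitz)
  show "(f has_derivative (\<lambda>h. f' x * h)) (at x within S)" if "x \<in> S" for x
    using has_field_derivative_imp_has_derivative[OF f'[OF that]]
    by (rule has_derivative_at_withinI)
  show "onorm (\<lambda>h. f' x * h) \<le> K" if "x \<in> S" for x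
    using bound[OF that] by (intro onorm_bound) (auto simp: abs_mult mult_right_mono \<open>0 \<le> K\<close>)
qed fact+

lemma lipschitz_on_Icc_of_continuous_deriv:
  fixes f f' :: "real \<Rightarrow> real"
  assumes f': "\<And>x. x \<in> {a..b} \<Longrightarrow> (f has_real_derivative f' x) (at x)"
    and cont: "continuous_on {a..b} f'"
  obtains L where "L-lipschitz_on {a..b} f"
proof -
  obtain K where "K > 0" "\<And>x. x \<in> {a..b} \<Longrightarrow> \<bar>f' x\<bar> \<le> K"
    using compact_imp_bounded[OF compact_continuous_image[OF cont compact_Icc]]
    by (auto simp: bounded_pos)
  then have "K-lipschitz_on {a..b} f"
    by (intro lipschitz_on_of_bounded_deriv[OF convex_real_interval(5) f']) auto
  then show thesis
    by (rule that)
qed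

lemma tendsto_at_left_of_bounded_deriv:
  fixes f f' :: "real \<Rightarrow> real"
  assumes "a < b"
    and f': "\<And>t. t \<in> {a..<b} \<Longrightarrow> (f has_real_derivative f' t) (at t)"
    and bound: "\<And>t. t \<in> {a..<b} \<Longrightarrow> \<bar>f' t\<bar> \<le> K"
  obtains l where "(f \<longlongrightarrow> l) (at_left b)"
proof -
  have "K-lipschitz_on {a..<b} f"
    using order_trans[OF abs_ge_zero bound[of a]] \<open>a < b\<close>
    by (intro lipschitz_on_of_bounded_deriv[OF convex_real_interval(7) f' bound]) auto
  then have "uniformly_continuous_on {a..<b} f"
    by (rule lipschitz_on_uniformly_continuous)
  moreover have "b \<in> closure {a..<b}"
    using \<open>a < b\<close> by simp
  ultimately obtain l where "(f \<longlongrightarrow> l) (at b within {a..<b})"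
    by (rule uniformly_continuous_on_extension_at_closure)
  moreover have "at b within {a..<b} = at_left b"
    using at_within_Icc_at_left[OF \<open>a < b\<close>]
    by (simp add: at_within_def atLeastLessThan_eq_atLeastAtMost_diff)
  ultimately show thesis
    using that by simp
qed

lemma not_tendsto_zero_at_left:
  fixes f :: "real \<Rightarrow> real"
  assumes "\<not> (f \<longlongrightarrow> 0) (at_left b)"
  obtains \<epsilon> where "0 < \<epsilon>" "\<And>s. s < b \<Longrightarrow> \<exists>t\<in>{s<..<b}. \<epsilon> \<le> \<bar>f t\<bar>"
proof -
  obtain \<epsilon> where "0 < \<epsilon>" and not_small: "\<not> (\<forall>\<^sub>F t in at_left b. dist (f t) 0 < \<epsilon>)"
    using assms unfolding tendsto_iff by auto
  have "\<exists>t\<in>{s<..<b}. \<epsilon> \<le> \<bar>f t\<bar>" if "s < b" for s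
  proof (rule ccontr)
    assume "\<not> ?thesis"
    then have "\<forall>\<^sub>F t in at_left b. dist (f t) 0 < \<epsilon>"
      using eventually_at_left_real[OF that] by (auto simp: not_le elim!: eventually_mono)
    then show False
      using not_small by contradiction
  qed
  then show thesis
    using that \<open>0 < \<epsilon>\<close> by blast
qed

lemma has_real_derivative_fst:
  "(\<phi> has_vector_derivative D) F \<Longrightarrow> ((\<lambda>t. fst (\<phi> t)) has_real_derivative fst D) F"
  unfolding has_real_derivative_iff_has_vector_derivative has_vector_derivative_def
  by (drule has_derivative_fst) simp

lemma has_real_derivative_snd:
  "(\<phi> has_vector_derivative D) F \<Longrightarrow> ((\<lambda>t. snd (\<phi> t)) has_real_derivative snd D) F"
  unfolding has_real_derivative_iff_has_vector_derivative has_vector_derivative_def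
  by (drule has_derivative_snd) simp

lemma has_real_derivative_if_left:
  assumes "(f has_real_derivative D) (at t)" "t < b"
  shows "((\<lambda>s. if s < b then f s else g s) has_real_derivative D) (at t)"
  using assms by (auto elim!: has_field_derivative_transform_within_open[where S="{..<b}"])

lemma has_real_derivative_if_right:
  assumes "(g has_real_derivative D) (at t within {b..c})" "b < t" "t < c"
  shows "((\<lambda>s. if s < b then f s else g s) has_real_derivative D) (at t)"
  using assms by (auto simp: at_within_Icc_at
      elim!: has_field_derivative_transform_within_open[where S="{b<..}"])

lemma has_real_derivative_glue:
  fixes f f' g :: "real \<Rightarrow> real"
  assumes f': "\<forall>\<^sub>F y in at_left x. (f has_real_derivative f' y) (at y)"
    and f_lim: "(f \<longlongrightarrow> c) (at_left x)" and f'_lim: "(f' \<longlongrightarrow> D) (at_left x)"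
    and g: "(g has_real_derivative D) (at x within {x..x+e})" and "0 < e" and "g x = c"
  shows "((\<lambda>y. if y < x then f y else g y) has_real_derivative D) (at x)"
proof -
  let ?h = "\<lambda>y. if y < x then f y else g y"
  have "((\<lambda>y. (f y - c) / (y - x)) \<longlongrightarrow> D) (at_left x)"
  proof (rule lhopital_left[where f'=f' and g'="\<lambda>_. 1"])
    show "((\<lambda>y. f y - c) \<longlongrightarrow> 0) (at_left x)"
      using tendsto_diff[OF f_lim tendsto_const, of c] by simp
    show "((\<lambda>y. y - x) \<longlongrightarrow> 0) (at_left x)"
      by (intro tendsto_eq_intros) auto
    show "\<forall>\<^sub>F y in at_left x. y - x \<noteq> 0"
      by (simp add: eventually_at_filter)
    show "\<forall>\<^sub>F y in at_left x. ((\<lambda>y. f y - c) has_real_derivative f' y) (at y)"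
      using f' by eventually_elim (auto intro!: derivative_eq_intros)
    show "\<forall>\<^sub>F y in at_left x. ((\<lambda>y. y - x) has_real_derivative 1) (at y)"
      by (auto intro!: always_eventually derivative_eq_intros)
  qed (use f'_lim in simp_all)
  then have "((\<lambda>y. (?h y - ?h x) / (y - x)) \<longlongrightarrow> D) (at_left x)"
    by (rule Lim_transform_eventually) (simp add: \<open>g x = c\<close> eventually_at_filter)
  moreover have "((\<lambda>y. (?h y - ?h x) / (y - x)) \<longlongrightarrow> D) (at_right x)"
  proof -
    have "at x within {x..x+e} = at_right x"
      using \<open>0 < e\<close> by (intro at_within_Icc_at_right) simp
    then have "((\<lambda>y. (g y - g x) / (y - x)) \<longlongrightarrow> D) (at_right x)"
      using g by (simp add: has_field_derivative_iff)
    then show ?thesis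
      by (rule Lim_transform_eventually) (simp add: eventually_at_filter)
  qed
  ultimately have "((\<lambda>y. (?h y - ?h x) / (y - x)) \<longlongrightarrow> D) (at x)"
    unfolding at_eq_sup_left_right by (rule filterlim_sup)
  then show ?thesis
    by (simp add: has_field_derivative_iff)
qed

lemma interior_min_deriv_zero:
  fixes r v :: "real \<Rightarrow> real"
  assumes r': "\<And>x. x \<in> {t1..t3} \<Longrightarrow> (r has_real_derivative v x) (at x)"
    and "t \<in> {t1..t3}" "r t < r t1" "r t < r t3"
  obtains \<tau> where "\<tau> \<in> {t1<..<t3}" "r \<tau> \<le> r t" "v \<tau> = 0"
proof -
  have "continuous_on {t1..t3} r"
    using r' by (blast intro: continuous_at_imp_continuous_on DERIV_isCont)
  then obtain \<tau> where \<tau>: "\<tau> \<in> {t1..t3}" "\<And>y. y \<in> {t1..t3} \<Longrightarrow> r \<tau> \<le> r y"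
    using continuous_attains_inf[of "{t1..t3}" r] \<open>t \<in> {t1..t3}\<close> by auto
  then have "r \<tau> \<le> r t"
    using \<open>t \<in> {t1..t3}\<close> by blast
  then have "\<tau> \<in> {t1<..<t3}"
    using \<tau>(1) \<open>r t < r t1\<close> \<open>r t < r t3\<close> by (cases "\<tau> = t1 \<or> \<tau> = t3") auto
  moreover have "v \<tau> = 0"
  proof (rule DERIV_local_min[OF r'[OF \<tau>(1)]])
    show "0 < min (\<tau> - t1) (t3 - \<tau>)"
      using \<open>\<tau> \<in> {t1<..<t3}\<close> by simp
    show "\<forall>y. \<bar>\<tau> - y\<bar> < min (\<tau> - t1) (t3 - \<tau>) \<longrightarrow> r \<tau> \<le> r y"
      using \<tau>(2) by (auto simp: abs_less_iff)
  qed
  ultimately show thesis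
    using that \<open>r \<tau> \<le> r t\<close> by blast
qed

lemma deriv_negative_of_tendsto_zero:
  fixes r v :: "real \<Rightarrow> real"
  assumes r': "\<And>t. t \<in> {s<..<b} \<Longrightarrow> (r has_real_derivative v t) (at t)"
    and v_cont: "\<And>t. t \<in> {s<..<b} \<Longrightarrow> isCont v t"
    and v_nonzero: "\<And>t. t \<in> {s<..<b} \<Longrightarrow> v t \<noteq> 0"
    and r_pos: "\<And>t. t \<in> {s<..<b} \<Longrightarrow> 0 < r t" and r_lim: "(r \<longlongrightarrow> 0) (at_left b)"
    and t: "t \<in> {s<..<b}"
  shows "v t < 0"
proof (rule ccontr)
  assume "\<not> v t < 0"
  then have "0 < v t"
    using v_nonzero[OF t] by linarith
  have v_pos: "0 < v x" if x: "x \<in> {t..<b}" for x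
  proof (rule ccontr)
    assume "\<not> 0 < v x"
    moreover have "continuous_on {t..x} v"
      using x t by (intro continuous_at_imp_continuous_on ballI v_cont) auto
    ultimately obtain y where "t \<le> y" "y \<le> x" "v y = 0"
      using IVT2'[of v x 0 t] \<open>0 < v t\<close> x by auto
    then show False
      using v_nonzero[of y] x t by auto
  qed
  have "r t \<le> r x" if "x \<in> {t..<b}" for x
  proof (rule DERIV_nonneg_imp_nondecreasing[where f = r])
    show "\<exists>y. (r has_real_derivative y) (at z) \<and> 0 \<le> y" if "t \<le> z" "z \<le> x" for z
      using r'[of z] v_pos[of z] that \<open>x \<in> {t..<b}\<close> t by (auto intro!: less_imp_le)
  qed (use that in simp)
  then have "r t \<le> 0"
    using eventually_at_left_real[of t b] t
    by (intro tendsto_lowerbound[OF r_lim]) (auto elim!: eventually_mono)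
  then show False
    using r_pos[OF t] by simp
qed

section \<open>Local existence by Picard iteration\<close>

(* Clamping the upper limit of integration turns the Picard operator into a self-map of the
   bounded continuous functions on the whole line, where Banach's fixed point theorem applies. *)
definition picard_map :: "('a::banach \<Rightarrow> 'a) \<Rightarrow> 'a \<Rightarrow> real \<Rightarrow> real \<Rightarrow> (real \<Rightarrow> 'a) \<Rightarrow> real \<Rightarrow> 'a"
  where "picard_map F y0 t0 t1 \<phi> t = y0 + integral {t0..clamp t0 t1 t} (\<lambda>s. F (\<phi> s))"

lemma clamp_real_mem: "t0 \<le> t1 \<Longrightarrow> clamp t0 t1 t \<in> {t0..t1}" for t :: real
  using clamp_in_interval[of t0 t1 t] by simp

lemma clamp_real_cancel: "t \<in> {t0..t1} \<Longrightarrow> clamp t0 t1 t = t" for t :: real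
  using clamp_cancel_cbox[of t t0 t1] by simp

context
  fixes F :: "'a::banach \<Rightarrow> 'a" and y0 :: 'a and b M t0 t1 :: real and \<phi> :: "real \<Rightarrow> 'a"
  assumes F_cont: "continuous_on (cball y0 b) F"
    and \<phi>_cont: "continuous_on {t0..t1} \<phi>" and \<phi>_mem: "\<And>t. t \<in> {t0..t1} \<Longrightarrow> \<phi> t \<in> cball y0 b"
    and "t0 \<le> t1"
begin

lemma continuous_on_field_along:
  "continuous_on {t0..t} (\<lambda>s. F (\<phi> s))" if "t \<le> t1"
  using that \<phi>_mem by (intro continuous_on_compose2[OF F_cont continuous_on_subset[OF \<phi>_cont]]) auto

lemma picard_map_mem_cball:
  assumes bound: "\<And>p. p \<in> cball y0 b \<Longrightarrow> norm (F p) \<le> M" and "(t1 - t0) * M \<le> b"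
  shows "picard_map F y0 t0 t1 \<phi> t \<in> cball y0 b"
proof -
  have t: "clamp t0 t1 t \<in> {t0..t1}"
    using clamp_real_mem \<open>t0 \<le> t1\<close> .
  have "norm (integral {t0..clamp t0 t1 t} (\<lambda>s. F (\<phi> s))) \<le> M * (clamp t0 t1 t - t0)"
    using t \<phi>_mem by (intro integral_bound continuous_on_field_along bound) auto
  also have "\<dots> \<le> M * (t1 - t0)"
    using t order_trans[OF norm_ge_zero bound[OF \<phi>_mem, of t0]] \<open>t0 \<le> t1\<close>
    by (intro mult_left_mono) auto
  finally show ?thesis
    using \<open>(t1 - t0) * M \<le> b\<close> by (simp add: picard_map_def dist_norm mult.commute)
qed

lemma picard_map_bcontfun:
  assumes bound: "\<And>p. p \<in> cball y0 b \<Longrightarrow> norm (F p) \<le> M" and "(t1 - t0) * M \<le> b"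
  shows "picard_map F y0 t0 t1 \<phi> \<in> bcontfun"
  unfolding bcontfun_def mem_Collect_eq
proof
  have "continuous_on {t0..t1} (\<lambda>u. integral {t0..u} (\<lambda>s. F (\<phi> s)))"
    by (intro indefinite_integral_continuous_1 integrable_continuous_real continuous_on_field_along)
      simp
  then show "continuous_on UNIV (picard_map F y0 t0 t1 \<phi>)"
    unfolding picard_map_def using \<open>t0 \<le> t1\<close>
    by (intro continuous_intros clamp_continuous_on) (simp add: cbox_interval)
  show "bounded (range (picard_map F y0 t0 t1 \<phi>))"
    using picard_map_mem_cball[OF assms] by (intro bounded_subset[OF bounded_cball]) auto
qed

lemma picard_map_has_vector_derivative:
  assumes "t \<in> {t0..t1}"
  shows "(picard_map F y0 t0 t1 \<phi> has_vector_derivative F (\<phi> t)) (at t within {t0..t1})"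
proof (rule has_vector_derivative_transform[OF assms])
  show "((\<lambda>u. y0 + integral {t0..u} (\<lambda>s. F (\<phi> s))) has_vector_derivative F (\<phi> t))
      (at t within {t0..t1})"
    using has_vector_derivative_add[OF has_vector_derivative_const
        integral_has_vector_derivative[OF continuous_on_field_along assms]] by simp
  show "picard_map F y0 t0 t1 \<phi> u = y0 + integral {t0..u} (\<lambda>s. F (\<phi> s))" if "u \<in> {t0..t1}" for u
    using that by (simp add: picard_map_def clamp_real_cancel)
qed

end

lemma picard_map_dist:
  fixes F :: "'a::banach \<Rightarrow> 'a"
  assumes lip: "L-lipschitz_on (cball y0 b) F" and "t0 \<le> t1"
    and cont: "continuous_on {t0..t1} \<phi>" "continuous_on {t0..t1} \<psi>"
    and mem: "\<And>t. t \<in> {t0..t1} \<Longrightarrow> \<phi> t \<in> cball y0 b" "\<And>t. t \<in> {t0..t1} \<Longrightarrow> \<psi> t \<in> cball y0 b"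
    and d: "\<And>t. t \<in> {t0..t1} \<Longrightarrow> dist (\<phi> t) (\<psi> t) \<le> d"
  shows "dist (picard_map F y0 t0 t1 \<phi> t) (picard_map F y0 t0 t1 \<psi> t) \<le> (t1 - t0) * L * d"
proof -
  have F_cont: "continuous_on (cball y0 b) F"
    using lip by (rule lipschitz_on_continuous_on)
  have t: "clamp t0 t1 t \<in> {t0..t1}"
    using clamp_real_mem \<open>t0 \<le> t1\<close> .
  have cont_F\<phi>: "continuous_on {t0..clamp t0 t1 t} (\<lambda>s. F (\<phi> s))"
    and cont_F\<psi>: "continuous_on {t0..clamp t0 t1 t} (\<lambda>s. F (\<psi> s))"
    using t continuous_on_field_along[OF F_cont cont(1) mem(1) \<open>t0 \<le> t1\<close>]
      continuous_on_field_along[OF F_cont cont(2) mem(2) \<open>t0 \<le> t1\<close>] by auto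
  have L: "0 \<le> L"
    using lip by (rule lipschitz_on_nonneg)
  have "dist (picard_map F y0 t0 t1 \<phi> t) (picard_map F y0 t0 t1 \<psi> t)
      = norm (integral {t0..clamp t0 t1 t} (\<lambda>s. F (\<phi> s) - F (\<psi> s)))"
    unfolding picard_map_def dist_norm
    by (simp add: integral_diff integrable_continuous_real[OF cont_F\<phi>]
        integrable_continuous_real[OF cont_F\<psi>])
  also have "\<dots> \<le> (L * d) * (clamp t0 t1 t - t0)"
  proof (rule integral_bound)
    show "continuous_on {t0..clamp t0 t1 t} (\<lambda>s. F (\<phi> s) - F (\<psi> s))"
      using cont_F\<phi> cont_F\<psi> by (rule continuous_on_diff)
    fix s assume "s \<in> {t0..clamp t0 t1 t}"
    then have s: "s \<in> {t0..t1}"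
      using t by auto
    have "norm (F (\<phi> s) - F (\<psi> s)) \<le> L * dist (\<phi> s) (\<psi> s)"
      using lipschitz_onD[OF lip mem(1)[OF s] mem(2)[OF s]] by (simp add: dist_norm)
    also have "\<dots> \<le> L * d"
      using d[OF s] L by (rule mult_left_mono)
    finally show "norm (F (\<phi> s) - F (\<psi> s)) \<le> L * d" .
  qed (use t in auto)
  also have "\<dots> \<le> (L * d) * (t1 - t0)"
    using t L order_trans[OF zero_le_dist d, of t0] \<open>t0 \<le> t1\<close> by (intro mult_left_mono) auto
  finally show ?thesis
    by (simp add: ac_simps)
qed

lemma picard_map_fixed_point:
  fixes F :: "'a::banach \<Rightarrow> 'a"
  assumes lip: "L-lipschitz_on (cball y0 b) F" and "0 < b"
    and bound: "\<And>p. p \<in> cball y0 b \<Longrightarrow> norm (F p) \<le> M"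
    and \<eta>: "0 \<le> \<eta>" "\<eta> * M \<le> b" "\<eta> * L \<le> 1 / 2"
  obtains \<phi> where "continuous_on UNIV \<phi>" "\<And>t. \<phi> t \<in> cball y0 b"
    "picard_map F y0 t0 (t0 + \<eta>) \<phi> = \<phi>"
proof -
  have F_cont: "continuous_on (cball y0 b) F"
    using lip by (rule lipschitz_on_continuous_on)
  define S :: "(real \<Rightarrow>\<^sub>C 'a) set" where "S = PiC UNIV (\<lambda>_. cball y0 b)"
  have S_iff: "f \<in> S \<longleftrightarrow> (\<forall>t. apply_bcontfun f t \<in> cball y0 b)" for f
    by (simp add: S_def mem_PiC_iff Pi_iff)
  let ?P = "picard_map F y0 t0 (t0 + \<eta>)"
  have P: "?P (apply_bcontfun f) \<in> bcontfun" "?P (apply_bcontfun f) t \<in> cball y0 b"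
    if "f \<in> S" for f t
    using picard_map_bcontfun[OF F_cont _ _ _ bound] picard_map_mem_cball[OF F_cont _ _ _ bound]
      that \<eta> by (auto simp: S_iff mult.commute)
  define T :: "(real \<Rightarrow>\<^sub>C 'a) \<Rightarrow> (real \<Rightarrow>\<^sub>C 'a)"
    where "T f = Bcontfun (?P (apply_bcontfun f))" for f
  have T: "apply_bcontfun (T f) = ?P (apply_bcontfun f)" if "f \<in> S" for f
    using P(1)[OF that] by (simp add: T_def Bcontfun_inverse)
  have "\<exists>!f\<in>S. T f = f"
  proof (rule Banach_fix)
    show "complete S"
      by (simp add: S_def complete_eq_closed closed_PiC)
    have "const_bcontfun y0 \<in> S"
      using \<open>0 < b\<close> by (simp add: S_iff const_bcontfun.rep_eq)
    then show "S \<noteq> {}"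
      by blast
    show "T ` S \<subseteq> S"
      using T P(2) by (auto simp: S_iff)
    show "dist (T f) (T g) \<le> 1 / 2 * dist f g" if "f \<in> S" "g \<in> S" for f g
    proof (rule dist_bound)
      fix t
      have "dist (?P (apply_bcontfun f) t) (?P (apply_bcontfun g) t) \<le> (t0 + \<eta> - t0) * L * dist f g"
        using that \<eta> by (intro picard_map_dist[OF lip] dist_bounded) (auto simp: S_iff)
      also have "\<dots> \<le> 1 / 2 * dist f g"
        using \<eta>(3) by (intro mult_right_mono) simp_all
      finally show "dist (T f t) (T g t) \<le> 1 / 2 * dist f g"
        using T that by simp
    qed
  qed simp_all
  then obtain f where "f \<in> S" "T f = f"
    by blast
  then have "?P (apply_bcontfun f) = apply_bcontfun f"
    using T by metis
  then show thesis
    using that[of "apply_bcontfun f"] \<open>f \<in> S\<close> by (simp add: S_iff)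
qed

lemma picard_local_existence:
  fixes F :: "'a::banach \<Rightarrow> 'a"
  assumes lip: "L-lipschitz_on (cball y0 b) F" and "0 < b"
  obtains \<eta> \<phi> where "0 < \<eta>" "\<phi> t0 = y0"
    "\<And>t. t \<in> {t0..t0+\<eta>} \<Longrightarrow> \<phi> t \<in> cball y0 b"
    "\<And>t. t \<in> {t0..t0+\<eta>} \<Longrightarrow> (\<phi> has_vector_derivative F (\<phi> t)) (at t within {t0..t0+\<eta>})"
proof -
  have L: "0 \<le> L"
    using lip by (rule lipschitz_on_nonneg)
  define M where "M = norm (F y0) + L * b + 1"
  have "0 < M"
    using L \<open>0 < b\<close> by (simp add: M_def add_nonneg_pos)
  have bound: "norm (F p) \<le> M" if "p \<in> cball y0 b" for p
  proof -
    have "norm (F p - F y0) \<le> L * norm (p - y0)"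
      using lipschitz_on_normD[OF lip that] \<open>0 < b\<close> by simp
    also have "\<dots> \<le> L * b"
      using that L by (intro mult_left_mono) (auto simp: dist_norm norm_minus_commute)
    finally show ?thesis
      unfolding M_def using norm_triangle_sub[of "F p" "F y0"] by linarith
  qed
  define \<eta> where "\<eta> = min (b / M) (1 / (2 * L + 1))"
  have \<eta>: "0 < \<eta>" "\<eta> * M \<le> b" "\<eta> * L \<le> 1 / 2"
    using \<open>0 < M\<close> \<open>0 < b\<close> L by (auto simp: \<eta>_def min_def field_simps)
  obtain \<phi> where "continuous_on UNIV \<phi>" "\<And>t. \<phi> t \<in> cball y0 b"
    and fixed: "picard_map F y0 t0 (t0 + \<eta>) \<phi> = \<phi>"
    using picard_map_fixed_point[OF lip \<open>0 < b\<close> bound less_imp_le[OF \<eta>(1)] \<eta>(2,3)] by blast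
  show thesis
  proof (rule that)
    show "\<phi> t0 = y0"
      using fixed[THEN fun_cong, of t0] \<eta> by (simp add: picard_map_def clamp_real_cancel)
    show "(\<phi> has_vector_derivative F (\<phi> t)) (at t within {t0..t0+\<eta>})" if "t \<in> {t0..t0+\<eta>}" for t
      using picard_map_has_vector_derivative[OF lipschitz_on_continuous_on[OF lip]
          continuous_on_subset[OF \<open>continuous_on UNIV \<phi>\<close>] \<open>\<And>t. \<phi> t \<in> cball y0 b\<close> _ that]
        \<eta>(1) by (simp add: fixed)
  qed (use \<eta>(1) \<open>\<And>t. \<phi> t \<in> cball y0 b\<close> in auto)
qed

section \<open>Solutions of the damped Kepler equation\<close>

definition damped_kepler_field :: "(real \<Rightarrow> real) \<Rightarrow> real \<times> real \<Rightarrow> real \<times> real"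
  where "damped_kepler_field \<delta> p = (snd p, - \<delta> (fst p) * snd p - 1 / (fst p)^2)"

lemma mem_cball_Pair_bounds:
  fixes \<rho> w :: real
  assumes "p \<in> cball (\<rho>, w) (\<rho>/2)"
  shows "fst p \<in> {\<rho>/2..3*\<rho>/2}" and "\<bar>snd p\<bar> \<le> \<bar>w\<bar> + \<rho>/2"
proof -
  have "\<bar>\<rho> - fst p\<bar> \<le> \<rho>/2" "\<bar>w - snd p\<bar> \<le> \<rho>/2"
    using assms dist_fst_le[of "(\<rho>, w)" p] dist_snd_le[of "(\<rho>, w)" p]
    by (auto simp: dist_real_def)
  then show "fst p \<in> {\<rho>/2..3*\<rho>/2}" "\<bar>snd p\<bar> \<le> \<bar>w\<bar> + \<rho>/2"
    using abs_ge_self[of w] abs_ge_minus_self[of w] unfolding abs_le_iff atLeastAtMost_iff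
    by linarith+
qed

lemma damped_kepler_field_lipschitz:
  fixes \<delta> \<delta>' :: "real \<Rightarrow> real"
  assumes \<delta>': "\<And>x. 0 < x \<Longrightarrow> (\<delta> has_real_derivative \<delta>' x) (at x)"
    and \<delta>'_cont: "continuous_on {0<..} \<delta>'" and "0 < \<rho>"
  obtains L where "L-lipschitz_on (cball (\<rho>, w) (\<rho>/2)) (damped_kepler_field \<delta>)"
proof -
  define C where "C = cball (\<rho>, w) (\<rho>/2)"
  define I where "I = {\<rho>/2..3*\<rho>/2}"
  have I_pos: "I \<subseteq> {0<..}"
    using \<open>0 < \<rho>\<close> by (auto simp: I_def)
  have fst_C: "fst ` C \<subseteq> I" and snd_C: "\<And>p. p \<in> C \<Longrightarrow> \<bar>snd p\<bar> \<le> \<bar>w\<bar> + \<rho>/2"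
    unfolding C_def I_def using mem_cball_Pair_bounds by blast+
  obtain L\<delta> where L\<delta>: "L\<delta>-lipschitz_on I \<delta>"
    using lipschitz_on_Icc_of_continuous_deriv[of "\<rho>/2" "3*\<rho>/2" \<delta> \<delta>'] \<delta>' I_pos
      continuous_on_subset[OF \<delta>'_cont I_pos] unfolding I_def by blast
  obtain Lg where Lg: "Lg-lipschitz_on I (\<lambda>x. 1 / x^2)"
  proof (rule lipschitz_on_Icc_of_continuous_deriv[of "\<rho>/2" "3*\<rho>/2" _ "\<lambda>x. - 2 / x^3"])
    show "((\<lambda>x. 1 / x^2) has_real_derivative - 2 / x^3) (at x)" if "x \<in> {\<rho>/2..3*\<rho>/2}" for x
      using that \<open>0 < \<rho>\<close> by (auto intro!: derivative_eq_intros simp: field_simps eval_nat_numeral)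
    show "continuous_on {\<rho>/2..3*\<rho>/2} (\<lambda>x. - 2 / x^3)"
      using \<open>0 < \<rho>\<close> by (intro continuous_intros) auto
  qed (auto simp: I_def)
  obtain D where D: "0 \<le> D" "\<And>x. x \<in> I \<Longrightarrow> \<bar>\<delta> x\<bar> \<le> D"
  proof -
    have "bounded (\<delta> ` I)"
      using lipschitz_on_continuous_on[OF L\<delta>] unfolding I_def
      by (intro compact_imp_bounded compact_continuous_image compact_Icc)
    then obtain D where "\<And>x. x \<in> I \<Longrightarrow> \<bar>\<delta> x\<bar> \<le> D"
      by (auto simp: bounded_real)
    then show thesis
      using that[of "max D 0"] by force
  qed
  have prod: "(D * 1 + (\<bar>w\<bar> + \<rho>/2) * (L\<delta> * 1))-lipschitz_on C (\<lambda>p. \<delta> (fst p) * snd p)"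
    using fst_C D snd_C \<open>0 < \<rho>\<close>
    by (intro lipschitz_on_mult lipschitz_on_snd lipschitz_on_compose2[OF lipschitz_on_fst]
        lipschitz_on_subset[OF L\<delta>]) auto
  have quot: "(Lg * 1)-lipschitz_on C (\<lambda>p. 1 / (fst p)^2)"
    using fst_C by (intro lipschitz_on_compose2[OF lipschitz_on_fst] lipschitz_on_subset[OF Lg])
  show thesis
    using that
      lipschitz_on_Pair[OF lipschitz_on_snd lipschitz_on_diff[OF lipschitz_on_minus[OF prod] quot]]
    by (simp add: C_def damped_kepler_field_def[abs_def])
qed

lemma damped_kepler_field_components:
  assumes "(\<phi> has_vector_derivative damped_kepler_field \<delta> (\<phi> t)) F"
  shows "((\<lambda>t. fst (\<phi> t)) has_real_derivative snd (\<phi> t)) F"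
    and "((\<lambda>t. snd (\<phi> t)) has_real_derivative - \<delta> (fst (\<phi> t)) * snd (\<phi> t) - 1 / (fst (\<phi> t))^2) F"
  using has_real_derivative_fst[OF assms] has_real_derivative_snd[OF assms]
  by (simp_all add: damped_kepler_field_def)

definition solves_on :: "(real \<Rightarrow> real) \<Rightarrow> real set \<Rightarrow> (real \<Rightarrow> real) \<Rightarrow> (real \<Rightarrow> real) \<Rightarrow> bool"
  where "solves_on \<delta> I r v \<longleftrightarrow> (\<forall>t\<in>I. 0 < r t \<and> (r has_real_derivative v t) (at t) \<and>
           (v has_real_derivative - \<delta> (r t) * v t - 1 / (r t)^2) (at t))"

lemma is_solution_iff: "is_solution \<delta> a b r \<longleftrightarrow> a < b \<and> (\<exists>v. solves_on \<delta> (eint a b) r v)"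
  by (auto simp: is_solution_def solves_on_def)

lemma solves_on_subset: "solves_on \<delta> J r v \<Longrightarrow> I \<subseteq> J \<Longrightarrow> solves_on \<delta> I r v"
  by (auto simp: solves_on_def)

lemma atLeastLessThan_subset_eint: "\<alpha> < ereal a \<Longrightarrow> {a..<b} \<subseteq> eint \<alpha> (ereal b)"
  by (auto simp: eint_def intro: order_less_le_trans)

lemma solves_on_eventually_at_left:
  assumes "solves_on \<delta> (eint \<alpha> (ereal b)) r v" "\<alpha> < ereal b"
  shows "\<forall>\<^sub>F t in at_left b. (r has_real_derivative v t) (at t) \<and>
    (v has_real_derivative - \<delta> (r t) * v t - 1 / (r t)^2) (at t)"
proof -
  obtain a where "\<alpha> < ereal a" "a < b"
    using ereal_dense2[OF \<open>\<alpha> < ereal b\<close>] by force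
  then have "\<forall>\<^sub>F t in at_left b. t \<in> eint \<alpha> (ereal b)"
    using atLeastLessThan_subset_eint[of \<alpha> a b] eventually_at_left_real[OF \<open>a < b\<close>]
    by (auto elim!: eventually_mono)
  then show ?thesis
    using assms(1) by (auto simp: solves_on_def elim!: eventually_mono)
qed

lemma solves_on_glue:
  fixes \<phi> :: "real \<Rightarrow> real \<times> real"
  assumes sol: "solves_on \<delta> (eint \<alpha> (ereal b)) r v" and "\<alpha> < ereal b"
    and \<delta>_cont: "isCont \<delta> \<rho>" and "0 < \<rho>"
    and r_lim: "(r \<longlongrightarrow> \<rho>) (at_left b)" and v_lim: "(v \<longlongrightarrow> w) (at_left b)"
    and "0 < \<eta>" and \<phi>_0: "\<phi> b = (\<rho>, w)" and \<phi>_pos: "\<And>t. t \<in> {b..b+\<eta>} \<Longrightarrow> 0 < fst (\<phi> t)"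
    and \<phi>': "\<And>t. t \<in> {b..b+\<eta>} \<Longrightarrow>
      (\<phi> has_vector_derivative damped_kepler_field \<delta> (\<phi> t)) (at t within {b..b+\<eta>})"
  shows "solves_on \<delta> (eint \<alpha> (ereal (b + \<eta>)))
    (\<lambda>t. if t < b then r t else fst (\<phi> t)) (\<lambda>t. if t < b then v t else snd (\<phi> t))"
  unfolding solves_on_def
proof
  let ?s = "\<lambda>t. if t < b then r t else fst (\<phi> t)" and ?u = "\<lambda>t. if t < b then v t else snd (\<phi> t)"
  note \<phi>1 = damped_kepler_field_components(1)[OF \<phi>']
    and \<phi>2 = damped_kepler_field_components(2)[OF \<phi>']
  note ev_sol = solves_on_eventually_at_left[OF sol \<open>\<alpha> < ereal b\<close>]
  have b: "b \<in> {b..b+\<eta>}"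
    using \<open>0 < \<eta>\<close> by simp
  fix t assume t: "t \<in> eint \<alpha> (ereal (b + \<eta>))"
  consider "t < b" | "t = b" | "b < t" by linarith
  then show "0 < ?s t \<and> (?s has_real_derivative ?u t) (at t) \<and>
    (?u has_real_derivative - \<delta> (?s t) * ?u t - 1 / (?s t)^2) (at t)"
  proof cases
    case 1
    then have "t \<in> eint \<alpha> (ereal b)"
      using t by (simp add: eint_def)
    then show ?thesis
      using sol 1 by (auto simp: solves_on_def intro!: has_real_derivative_if_left)
  next
    case 2
    have "(?s has_real_derivative w) (at b)"
      using \<phi>1[OF b] \<phi>_0 ev_sol
      by (intro has_real_derivative_glue[OF _ r_lim v_lim _ \<open>0 < \<eta>\<close>]) (auto elim: eventually_mono)
    moreover have "((\<lambda>t. - \<delta> (r t) * v t - 1 / (r t)^2) \<longlongrightarrow> - \<delta> \<rho> * w - 1 / \<rho>^2) (at_left b)"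
      using \<open>0 < \<rho>\<close>
      by (intro tendsto_intros isCont_tendsto_compose[OF \<delta>_cont r_lim] r_lim v_lim) auto
    then have "(?u has_real_derivative - \<delta> \<rho> * w - 1 / \<rho>^2) (at b)"
      using \<phi>2[OF b] \<phi>_0 ev_sol
      by (intro has_real_derivative_glue[OF _ v_lim _ _ \<open>0 < \<eta>\<close>]) (auto elim: eventually_mono)
    ultimately show ?thesis
      using 2 \<phi>_0 \<open>0 < \<rho>\<close> by simp
  next
    case 3
    then have t': "t \<in> {b..b+\<eta>}" and "t < b + \<eta>"
      using t by (auto simp: eint_def)
    then show ?thesis
      using 3 \<phi>_pos[OF t'] \<phi>1[OF t'] \<phi>2[OF t'] by (auto intro!: has_real_derivative_if_right)
  qed
qed

(* If (r, r') tended to a regular point (rho, w) with rho > 0, the local solution through it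
   would continue r beyond b. *)
lemma maximal_solution_left_limit_nonpos:
  fixes \<delta> \<delta>' :: "real \<Rightarrow> real"
  assumes max: "maximal_solution \<delta> \<alpha> (ereal b) r" and sol: "solves_on \<delta> (eint \<alpha> (ereal b)) r v"
    and \<delta>': "\<And>x. 0 < x \<Longrightarrow> (\<delta> has_real_derivative \<delta>' x) (at x)" and "continuous_on {0<..} \<delta>'"
    and r_lim: "(r \<longlongrightarrow> \<rho>) (at_left b)" and v_lim: "(v \<longlongrightarrow> w) (at_left b)"
  shows "\<rho> \<le> 0"
proof (rule ccontr)
  assume "\<not> \<rho> \<le> 0"
  then have "0 < \<rho>" by simp
  obtain L where "L-lipschitz_on (cball (\<rho>, w) (\<rho>/2)) (damped_kepler_field \<delta>)"
    using damped_kepler_field_lipschitz[OF \<delta>' \<open>continuous_on {0<..} \<delta>'\<close> \<open>0 < \<rho>\<close>] by blast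
  then obtain \<eta> \<phi> where "0 < \<eta>" "\<phi> b = (\<rho>, w)"
    and \<phi>_mem: "\<And>t. t \<in> {b..b+\<eta>} \<Longrightarrow> \<phi> t \<in> cball (\<rho>, w) (\<rho>/2)"
    and \<phi>': "\<And>t. t \<in> {b..b+\<eta>} \<Longrightarrow>
      (\<phi> has_vector_derivative damped_kepler_field \<delta> (\<phi> t)) (at t within {b..b+\<eta>})"
    using picard_local_existence[of L "(\<rho>, w)" "\<rho>/2" _ b] \<open>0 < \<rho>\<close> by auto
  have \<phi>_pos: "0 < fst (\<phi> t)" if "t \<in> {b..b+\<eta>}" for t
    using mem_cball_Pair_bounds(1)[OF \<phi>_mem[OF that]] \<open>0 < \<rho>\<close> by simp
  have "\<alpha> < ereal b"
    using max by (simp add: maximal_solution_def is_solution_iff)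
  have "isCont \<delta> \<rho>"
    using \<delta>' \<open>0 < \<rho>\<close> by (blast intro: DERIV_isCont)
  have "is_solution \<delta> \<alpha> (ereal (b + \<eta>)) (\<lambda>t. if t < b then r t else fst (\<phi> t))"
    unfolding is_solution_iff
    using solves_on_glue[OF sol \<open>\<alpha> < ereal b\<close> \<open>isCont \<delta> \<rho>\<close> \<open>0 < \<rho>\<close> r_lim v_lim \<open>0 < \<eta>\<close>
        \<open>\<phi> b = (\<rho>, w)\<close> \<phi>_pos \<phi>'] \<open>\<alpha> < ereal b\<close> \<open>0 < \<eta>\<close>
    by (auto intro: order_less_le_trans)
  moreover have "\<forall>t\<in>eint \<alpha> (ereal b). (if t < b then r t else fst (\<phi> t)) = r t"
    by (simp add: eint_def)
  moreover have "ereal b \<le> ereal (b + \<eta>)"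
    using \<open>0 < \<eta>\<close> by simp
  ultimately have "ereal (b + \<eta>) = ereal b"
    using max unfolding maximal_solution_def by blast
  then show False
    using \<open>0 < \<eta>\<close> by simp
qed

section \<open>Energy and collision\<close>

lemma solves_on_energy:
  "solves_on \<delta> I r v \<Longrightarrow> t \<in> I \<Longrightarrow> energy r t = (v t)^2 / 2 - 1 / r t"
  by (auto simp: solves_on_def energy_def DERIV_imp_deriv)

lemma solves_on_energy_deriv:
  assumes "solves_on \<delta> I r v" "t \<in> I"
  shows "((\<lambda>t. (v t)^2 / 2 - 1 / r t) has_real_derivative - \<delta> (r t) * (v t)^2) (at t)"
  using assms unfolding solves_on_def
  by (auto intro!: derivative_eq_intros simp: field_simps power2_eq_square)

lemma solves_on_energy_antimono:
  assumes sol: "solves_on \<delta> {a..<b} r v" and \<delta>_nonneg: "\<And>x. 0 < x \<Longrightarrow> 0 \<le> \<delta> x"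
    and "a \<le> s" "s \<le> t" "t < b"
  shows "energy r t \<le> energy r s"
proof -
  have "(v t)^2 / 2 - 1 / r t \<le> (v s)^2 / 2 - 1 / r s"
  proof (rule DERIV_nonpos_imp_nonincreasing[OF \<open>s \<le> t\<close>])
    fix x assume "s \<le> x" "x \<le> t"
    then have x: "x \<in> {a..<b}"
      using assms by auto
    then have "0 \<le> \<delta> (r x)"
      using sol \<delta>_nonneg by (simp add: solves_on_def)
    then show "\<exists>y. ((\<lambda>t. (v t)^2 / 2 - 1 / r t) has_real_derivative y) (at x) \<and> y \<le> 0"
      using solves_on_energy_deriv[OF sol x] by auto
  qed
  then show ?thesis
    using assms by (simp add: solves_on_energy[OF sol])
qed

lemma solves_on_energy_bounds:
  assumes sol: "solves_on \<delta> {a..<b} r v" and \<delta>_nonneg: "\<And>x. 0 < x \<Longrightarrow> 0 \<le> \<delta> x" and "a < b"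
    and lim: "((\<lambda>t. ereal (energy r t)) \<longlongrightarrow> L) (at_left b)" and "- \<infinity> < L"
  obtains H where "\<And>t. t \<in> {a..<b} \<Longrightarrow> H \<le> energy r t \<and> energy r t \<le> energy r a"
proof -
  have L_le: "L \<le> ereal (energy r t)" if "t \<in> {a..<b}" for t
  proof (rule tendsto_upperbound[OF lim])
    show "\<forall>\<^sub>F s in at_left b. ereal (energy r s) \<le> ereal (energy r t)"
      using eventually_at_left_real[of t b] that
      by (auto elim!: eventually_mono intro: solves_on_energy_antimono[OF sol \<delta>_nonneg])
  qed simp
  obtain H where "L = ereal H"
    using L_le[of a] \<open>a < b\<close> \<open>- \<infinity> < L\<close> by (cases L) auto
  then show thesis
    using that[of H] L_le solves_on_energy_antimono[OF sol \<delta>_nonneg] by auto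
qed

lemma solves_on_turning_point_radius:
  assumes sol: "solves_on \<delta> I r v" and "t \<in> I" "v t = 0" "H \<le> energy r t"
  shows "1 / (\<bar>H\<bar> + 1) < r t"
proof -
  have "0 < r t"
    using sol \<open>t \<in> I\<close> by (simp add: solves_on_def)
  have "H \<le> - 1 / r t"
    using assms solves_on_energy[OF sol \<open>t \<in> I\<close>] by simp
  then have "1 / r t < \<bar>H\<bar> + 1"
    by linarith
  then show ?thesis
    using \<open>0 < r t\<close> by (simp add: field_simps)
qed

lemma abs_le_of_kinetic_bound:
  fixes x y M c :: real
  assumes "y^2 / 2 - 1 / x \<le> M" "0 < c" "c \<le> x"
  shows "\<bar>y\<bar> \<le> 1 + 2 * \<bar>M\<bar> + 2 / c"
proof -
  have "1 / x \<le> 1 / c"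
    using assms by (intro divide_left_mono) auto
  then have "y^2 \<le> 2 * \<bar>M\<bar> + 2 / c"
    using assms(1) by simp
  moreover have "\<bar>y\<bar> \<le> 1 + y^2"
    using zero_le_power2[of "\<bar>y\<bar> - 1"]
    by (simp add: power2_eq_square algebra_simps abs_mult_self_eq)
  ultimately show ?thesis
    by linarith
qed

(* A dip of r below c between two times where r >= epsilon creates an interior minimum, that is
   a turning point, and turning points stay above 1 / (|H| + 1). *)
lemma radius_eventually_bounded_below:
  assumes sol: "solves_on \<delta> {a..<b} r v" and H: "\<And>t. t \<in> {a..<b} \<Longrightarrow> H \<le> energy r t"
    and "a < b" and "\<not> (r \<longlongrightarrow> 0) (at_left b)"
  obtains c t1 where "0 < c" "t1 \<in> {a..<b}" "\<And>t. t \<in> {t1..<b} \<Longrightarrow> c \<le> r t"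
proof -
  obtain \<epsilon> where "0 < \<epsilon>" and large_abs: "\<And>s. s < b \<Longrightarrow> \<exists>t\<in>{s<..<b}. \<epsilon> \<le> \<bar>r t\<bar>"
    using not_tendsto_zero_at_left[OF \<open>\<not> (r \<longlongrightarrow> 0) (at_left b)\<close>] by blast
  have large: "\<exists>t\<in>{s<..<b}. \<epsilon> \<le> r t" if s: "s \<in> {a..<b}" for s
  proof -
    obtain t where "t \<in> {s<..<b}" "\<epsilon> \<le> \<bar>r t\<bar>"
      using large_abs[of s] s by auto
    moreover have "0 < r t"
      using sol s \<open>t \<in> {s<..<b}\<close> by (simp add: solves_on_def)
    ultimately show ?thesis
      by auto
  qed
  define c0 where "c0 = 1 / (\<bar>H\<bar> + 1)"
  define c where "c = min \<epsilon> c0 / 2"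
  have "0 < c0"
    by (simp add: c0_def add_pos_nonneg)
  then have c: "0 < c" "c < \<epsilon>" "c < c0"
    using \<open>0 < \<epsilon>\<close> by (auto simp: c_def min_def)
  obtain t1 where t1: "t1 \<in> {a<..<b}" "\<epsilon> \<le> r t1"
    using large[of a] \<open>a < b\<close> by auto
  have "c \<le> r t" if t: "t \<in> {t1..<b}" for t
  proof (rule ccontr)
    assume "\<not> c \<le> r t"
    obtain t3 where t3: "t3 \<in> {t<..<b}" "\<epsilon> \<le> r t3"
      using large[of t] t t1 by auto
    have "\<And>x. x \<in> {t1..t3} \<Longrightarrow> (r has_real_derivative v x) (at x)"
      using sol t1 t3 by (auto simp: solves_on_def)
    then obtain \<tau> where \<tau>: "\<tau> \<in> {t1<..<t3}" "r \<tau> \<le> r t" "v \<tau> = 0"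
      using interior_min_deriv_zero[of t1 t3 r v t] t t3 c \<open>\<not> c \<le> r t\<close> t1 by force
    then have "\<tau> \<in> {a..<b}"
      using t1 t3 by auto
    then have "c0 < r \<tau>"
      unfolding c0_def using solves_on_turning_point_radius[OF sol _ \<open>v \<tau> = 0\<close> H] by blast
    then show False
      using \<tau>(2) c \<open>\<not> c \<le> r t\<close> by linarith
  qed
  moreover have "t1 \<in> {a..<b}"
    using t1(1) by simp
  ultimately show thesis
    using that c(1) by blast
qed

lemma solves_on_left_limits:
  assumes sol: "solves_on \<delta> {a..<b} r v" and "a < b" and \<delta>_bound: "\<And>x. 0 < x \<Longrightarrow> \<bar>\<delta> x\<bar> \<le> D"
    and "0 < c" and r_lower: "\<And>t. t \<in> {a..<b} \<Longrightarrow> c \<le> r t"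
    and M: "\<And>t. t \<in> {a..<b} \<Longrightarrow> energy r t \<le> M"
  obtains \<rho> w where "(r \<longlongrightarrow> \<rho>) (at_left b)" "(v \<longlongrightarrow> w) (at_left b)" "c \<le> \<rho>"
proof -
  define V where "V = 1 + 2 * \<bar>M\<bar> + 2 / c"
  have v_bound: "\<bar>v t\<bar> \<le> V" if t: "t \<in> {a..<b}" for t
    unfolding V_def using M[OF t] solves_on_energy[OF sol t] \<open>0 < c\<close> r_lower[OF t]
    by (intro abs_le_of_kinetic_bound) auto
  have v'_bound: "\<bar>- \<delta> (r t) * v t - 1 / (r t)^2\<bar> \<le> D * V + 1 / c^2" if t: "t \<in> {a..<b}" for t
  proof -
    have "0 < r t"
      using sol t by (simp add: solves_on_def)
    then have "\<bar>\<delta> (r t) * v t\<bar> \<le> D * V" and "0 \<le> 1 / (r t)^2"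
      unfolding abs_mult using \<delta>_bound v_bound[OF t]
      by (auto intro!: mult_mono intro: order_trans[OF abs_ge_zero])
    moreover have "1 / (r t)^2 \<le> 1 / c^2"
      using r_lower[OF t] \<open>0 < c\<close> by (intro divide_left_mono power_mono) auto
    ultimately show ?thesis
      unfolding abs_le_iff by linarith
  qed
  have r': "(r has_real_derivative v t) (at t)"
    and v': "(v has_real_derivative - \<delta> (r t) * v t - 1 / (r t)^2) (at t)" if "t \<in> {a..<b}" for t
    using sol that by (simp_all add: solves_on_def)
  obtain \<rho> where r_lim: "(r \<longlongrightarrow> \<rho>) (at_left b)"
    using tendsto_at_left_of_bounded_deriv[OF \<open>a < b\<close> r' v_bound] by blast
  moreover obtain w where "(v \<longlongrightarrow> w) (at_left b)"
    using tendsto_at_left_of_bounded_deriv[OF \<open>a < b\<close> v' v'_bound] by blast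
  moreover have "c \<le> \<rho>"
    using eventually_at_left_real[OF \<open>a < b\<close>] r_lower
    by (intro tendsto_lowerbound[OF r_lim]) (auto elim!: eventually_mono)
  ultimately show thesis
    using that by blast
qed

lemma maximal_solution_collision:
  fixes \<delta> \<delta>' :: "real \<Rightarrow> real"
  assumes max: "maximal_solution \<delta> \<alpha> (ereal b) r" and sol: "solves_on \<delta> (eint \<alpha> (ereal b)) r v"
    and \<delta>': "\<And>x. 0 < x \<Longrightarrow> (\<delta> has_real_derivative \<delta>' x) (at x)" and "continuous_on {0<..} \<delta>'"
    and \<delta>_bound: "\<And>x. 0 < x \<Longrightarrow> \<bar>\<delta> x\<bar> \<le> D"
    and "\<alpha> < ereal a" "a < b"
    and energy_bounds: "\<And>t. t \<in> {a..<b} \<Longrightarrow> H \<le> energy r t \<and> energy r t \<le> M"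
  shows "(r \<longlongrightarrow> 0) (at_left b)"
proof (rule ccontr)
  assume "\<not> (r \<longlongrightarrow> 0) (at_left b)"
  have sol_ab: "solves_on \<delta> {a..<b} r v"
    using sol atLeastLessThan_subset_eint[OF \<open>\<alpha> < ereal a\<close>] by (rule solves_on_subset)
  obtain c t1 where "0 < c" "t1 \<in> {a..<b}" and r_lower: "\<And>t. t \<in> {t1..<b} \<Longrightarrow> c \<le> r t"
    using radius_eventually_bounded_below[OF sol_ab _ \<open>a < b\<close> \<open>\<not> (r \<longlongrightarrow> 0) (at_left b)\<close>]
      energy_bounds by blast
  have sol_t1: "solves_on \<delta> {t1..<b} r v"
    by (rule solves_on_subset[OF sol_ab]) (use \<open>t1 \<in> {a..<b}\<close> in auto)
  have M_t1: "\<And>t. t \<in> {t1..<b} \<Longrightarrow> energy r t \<le> M"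
    using energy_bounds \<open>t1 \<in> {a..<b}\<close> by simp
  have "t1 < b"
    using \<open>t1 \<in> {a..<b}\<close> by simp
  obtain \<rho> w where "(r \<longlongrightarrow> \<rho>) (at_left b)" "(v \<longlongrightarrow> w) (at_left b)" "c \<le> \<rho>"
    using solves_on_left_limits[OF sol_t1 \<open>t1 < b\<close> \<delta>_bound \<open>0 < c\<close> r_lower M_t1] by blast
  moreover have "\<rho> \<le> 0"
    using maximal_solution_left_limit_nonpos[OF max sol \<delta>' \<open>continuous_on {0<..} \<delta>'\<close>] calculation
    by blast
  ultimately show False
    using \<open>0 < c\<close> by linarith
qed

section \<open>Asymptotics at the collision\<close>

lemma velocity_eventually_negative:
  assumes sol: "solves_on \<delta> {a..<b} r v" and H: "\<And>t. t \<in> {a..<b} \<Longrightarrow> H \<le> energy r t"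
    and "a < b" and r_lim: "(r \<longlongrightarrow> 0) (at_left b)"
  shows "\<forall>\<^sub>F t in at_left b. v t < 0"
proof -
  have "0 < 1 / (\<bar>H\<bar> + 1)"
    by (simp add: add_pos_nonneg)
  then have "\<forall>\<^sub>F t in at_left b. r t < 1 / (\<bar>H\<bar> + 1)"
    by (rule order_tendstoD(2)[OF r_lim])
  then obtain b' where "b' < b" and r_small: "\<And>t. t \<in> {b'<..<b} \<Longrightarrow> r t < 1 / (\<bar>H\<bar> + 1)"
    unfolding eventually_at_left_field by auto
  define s where "s = max a b'"
  have "s < b" and s: "\<And>t. t \<in> {s<..<b} \<Longrightarrow> t \<in> {a..<b} \<and> t \<in> {b'<..<b}"
    using \<open>b' < b\<close> \<open>a < b\<close> by (auto simp: s_def)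
  have r': "(r has_real_derivative v t) (at t)" and r_pos: "0 < r t" and v_cont: "isCont v t"
    if "t \<in> {a..<b}" for t
    using sol that by (auto simp: solves_on_def intro: DERIV_isCont)
  have v_nonzero: "v t \<noteq> 0" if "t \<in> {s<..<b}" for t
    using solves_on_turning_point_radius[OF sol _ _ H, of t] r_small s[OF that] by force
  have "v t < 0" if "t \<in> {s<..<b}" for t
    by (rule deriv_negative_of_tendsto_zero[OF _ _ v_nonzero _ r_lim that])
      (use r' r_pos v_cont s in \<open>meson\<close>)+
  then show ?thesis
    using eventually_at_left_real[OF \<open>s < b\<close>] by (auto elim!: eventually_mono)
qed

lemma sqrt_radius_velocity_tendsto:
  assumes sol: "solves_on \<delta> {a..<b} r v" and "a < b"
    and energy_bounds: "\<And>t. t \<in> {a..<b} \<Longrightarrow> H \<le> energy r t \<and> energy r t \<le> M"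
    and r_lim: "(r \<longlongrightarrow> 0) (at_left b)" and v_neg: "\<forall>\<^sub>F t in at_left b. v t < 0"
  shows "((\<lambda>t. sqrt (r t) * v t) \<longlongrightarrow> - sqrt 2) (at_left b)"
proof -
  have ev: "\<forall>\<^sub>F t in at_left b. t \<in> {a..<b}"
    using eventually_at_left_real[OF \<open>a < b\<close>] by (auto elim!: eventually_mono)
  have "((\<lambda>t. r t * energy r t) \<longlongrightarrow> 0) (at_left b)"
  proof (rule Lim_null_comparison)
    show "\<forall>\<^sub>F t in at_left b. norm (r t * energy r t) \<le> r t * (\<bar>H\<bar> + \<bar>M\<bar>)"
      using ev
    proof eventually_elim
      case (elim t)
      then have "\<bar>energy r t\<bar> \<le> \<bar>H\<bar> + \<bar>M\<bar>" and "0 < r t"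
        using energy_bounds[OF elim] sol by (auto simp: solves_on_def)
      then show ?case
        by (simp add: abs_mult mult_left_mono)
    qed
    show "((\<lambda>t. r t * (\<bar>H\<bar> + \<bar>M\<bar>)) \<longlongrightarrow> 0) (at_left b)"
      using tendsto_mult_left_zero[OF r_lim] .
  qed
  then have "((\<lambda>t. 2 * (r t * energy r t) + 2) \<longlongrightarrow> 2) (at_left b)"
    using tendsto_add[OF tendsto_mult_right_zero tendsto_const, of _ _ 2 2] by simp
  then have "((\<lambda>t. r t * (v t)^2) \<longlongrightarrow> 2) (at_left b)"
  proof (rule Lim_transform_eventually)
    show "\<forall>\<^sub>F t in at_left b. 2 * (r t * energy r t) + 2 = r t * (v t)^2"
      using ev
    proof eventually_elim
      case (elim t)
      then have "0 < r t"
        using sol by (simp add: solves_on_def)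
      then show ?case
        using solves_on_energy[OF sol elim] by (simp add: field_simps)
    qed
  qed
  then have "((\<lambda>t. - sqrt (r t * (v t)^2)) \<longlongrightarrow> - sqrt 2) (at_left b)"
    by (intro tendsto_intros)
  then show ?thesis
  proof (rule Lim_transform_eventually)
    show "\<forall>\<^sub>F t in at_left b. - sqrt (r t * (v t)^2) = sqrt (r t) * v t"
      using v_neg by eventually_elim (simp add: real_sqrt_mult)
  qed
qed

lemma radius_powr_three_halves_tendsto:
  assumes sol: "solves_on \<delta> {a..<b} r v" and "a < b" and r_lim: "(r \<longlongrightarrow> 0) (at_left b)"
    and sv_lim: "((\<lambda>t. sqrt (r t) * v t) \<longlongrightarrow> - sqrt 2) (at_left b)"
  shows "((\<lambda>t. r t powr (3/2) / (b - t)) \<longlongrightarrow> 3/2 * sqrt 2) (at_left b)"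
proof (rule lhopital_left[where f'="\<lambda>t. 3/2 * sqrt (r t) * v t" and g'="\<lambda>_. - 1"])
  have ev: "\<forall>\<^sub>F t in at_left b. 0 < r t \<and> (r has_real_derivative v t) (at t)"
    using eventually_at_left_real[OF \<open>a < b\<close>] sol
    by (auto simp: solves_on_def elim!: eventually_mono)
  then have "\<forall>\<^sub>F t in at_left b. 0 \<le> r t"
    by (auto elim!: eventually_mono)
  then show "((\<lambda>t. r t powr (3/2)) \<longlongrightarrow> 0) (at_left b)"
    by (intro tendsto_zero_powrI[OF r_lim tendsto_const]) simp_all
  show "\<forall>\<^sub>F t in at_left b.
    ((\<lambda>t. r t powr (3/2)) has_real_derivative 3/2 * sqrt (r t) * v t) (at t)"
    using ev by eventually_elim
      (auto intro!: derivative_eq_intros simp: powr_half_sqrt[symmetric] powr_diff)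
  show "((\<lambda>t. b - t) \<longlongrightarrow> 0) (at_left b)"
    by (intro tendsto_eq_intros) auto
  show "\<forall>\<^sub>F t in at_left b. b - t \<noteq> 0"
    by (simp add: eventually_at_filter)
  show "\<forall>\<^sub>F t in at_left b. ((\<lambda>t. b - t) has_real_derivative - 1) (at t)"
    by (auto intro!: always_eventually derivative_eq_intros)
  show "((\<lambda>t. 3/2 * sqrt (r t) * v t / - 1) \<longlongrightarrow> 3/2 * sqrt 2) (at_left b)"
    using tendsto_mult_left[OF sv_lim, of "- (3/2)"] by (simp add: mult.assoc)
qed simp

lemma three_halves_sqrt_two_powr: "(3/2 * sqrt 2) powr (2/3) = root 3 (9/2)"
proof -
  define K :: real where "K = 3/2 * sqrt 2"
  have "K powr 2 = 9/2"
    by (simp add: K_def power_mult_distrib power_divide)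
  have "root 3 (9/2) = (9/2) powr (1/3)"
    by (simp add: root_powr_inverse)
  also have "\<dots> = (K powr 2) powr (1/3)"
    by (simp only: \<open>K powr 2 = 9/2\<close>)
  also have "\<dots> = K powr (2/3)"
    by (simp add: powr_powr)
  finally show ?thesis
    by (simp add: K_def)
qed

lemma collision_asymptotics:
  assumes sol: "solves_on \<delta> {a..<b} r v" and "a < b"
    and energy_bounds: "\<And>t. t \<in> {a..<b} \<Longrightarrow> H \<le> energy r t \<and> energy r t \<le> M"
    and r_lim: "(r \<longlongrightarrow> 0) (at_left b)"
  shows "((\<lambda>t. r t / (b - t) powr (2/3)) \<longlongrightarrow> root 3 (9/2)) (at_left b)"
proof -
  have "\<forall>\<^sub>F t in at_left b. v t < 0"
    using velocity_eventually_negative[OF sol _ \<open>a < b\<close> r_lim] energy_bounds by blast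
  then have "((\<lambda>t. r t powr (3/2) / (b - t)) \<longlongrightarrow> 3/2 * sqrt 2) (at_left b)"
    using radius_powr_three_halves_tendsto[OF sol \<open>a < b\<close> r_lim]
      sqrt_radius_velocity_tendsto[OF sol \<open>a < b\<close> energy_bounds r_lim] by blast
  then have "((\<lambda>t. (r t powr (3/2) / (b - t)) powr (2/3)) \<longlongrightarrow> root 3 (9/2)) (at_left b)"
    unfolding three_halves_sqrt_two_powr[symmetric] by (rule tendsto_powr) simp_all
  moreover have "\<forall>\<^sub>F t in at_left b. 0 < r t"
    using eventually_at_left_real[OF \<open>a < b\<close>] sol
    by (auto simp: solves_on_def elim!: eventually_mono)
  then have "\<forall>\<^sub>F t in at_left b. (r t powr (3/2) / (b - t)) powr (2/3) = r t / (b - t) powr (2/3)"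
    by eventually_elim (simp add: powr_divide powr_powr)
  ultimately show ?thesis
    by (simp add: tendsto_cong)
qed

theorem corollary8p2:
  fixes \<delta> r :: "real \<Rightarrow> real" and \<alpha> \<omega> :: ereal
  assumes nonneg: "\<forall>x>0. \<delta> x \<ge> 0"
    and bdd: "bounded (\<delta> ` {0<..})"
    and C1: "\<exists>\<delta>'. continuous_on {0<..} \<delta>' \<and> (\<forall>x>0. (\<delta> has_real_derivative \<delta>' x) (at x))"
    and sol: "maximal_solution \<delta> \<alpha> \<omega> r"
    and fin: "\<omega> < \<infinity>"
    and hlim: "\<exists>L. ((\<lambda>t. ereal (energy r t)) \<longlongrightarrow> L) (at_left (real_of_ereal \<omega>)) \<and> L > -\<infinity>"
  shows "((\<lambda>t. r t / (real_of_ereal \<omega> - t) powr (2/3)) \<longlongrightarrow> root 3 (9/2))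
           (at_left (real_of_ereal \<omega>))"
proof -
  obtain v where sol_v: "solves_on \<delta> (eint \<alpha> \<omega>) r v" and "\<alpha> < \<omega>"
    using sol by (auto simp: maximal_solution_def is_solution_iff)
  obtain b where \<omega>: "\<omega> = ereal b"
    using fin \<open>\<alpha> < \<omega>\<close> by (cases \<omega>) auto
  obtain a where "\<alpha> < ereal a" "a < b"
    using ereal_dense2[OF \<open>\<alpha> < \<omega>\<close>[unfolded \<omega>]] by force
  have sol_ab: "solves_on \<delta> {a..<b} r v"
    using sol_v[unfolded \<omega>] atLeastLessThan_subset_eint[OF \<open>\<alpha> < ereal a\<close>] by (rule solves_on_subset)
  obtain \<delta>' where "continuous_on {0<..} \<delta>'" "\<And>x. 0 < x \<Longrightarrow> (\<delta> has_real_derivative \<delta>' x) (at x)"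
    using C1 by blast
  moreover obtain D where "\<And>x. 0 < x \<Longrightarrow> \<bar>\<delta> x\<bar> \<le> D"
    using bdd by (auto simp: bounded_real)
  moreover obtain H
    where energy_bounds: "\<And>t. t \<in> {a..<b} \<Longrightarrow> H \<le> energy r t \<and> energy r t \<le> energy r a"
    using solves_on_energy_bounds[OF sol_ab _ \<open>a < b\<close>] nonneg hlim unfolding \<omega> by auto
  ultimately have "(r \<longlongrightarrow> 0) (at_left b)"
    using maximal_solution_collision[OF sol[unfolded \<omega>] sol_v[unfolded \<omega>]] \<open>\<alpha> < ereal a\<close> \<open>a < b\<close>
    by blast
  then show ?thesis
    using collision_asymptotics[OF sol_ab \<open>a < b\<close> energy_bounds] unfolding \<omega> by simp
qed

end
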